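(* For any space $X$, $\mathcal{K}(X) =_T \mathcal{K}(\mathcal{K}(X))$.
   Context: All spaces are Tychonoff. $\mathcal{K}(X)$ is the set of compact subsets of $X$ ordered by inclusion and equipped with the Vietoris topology; $\mathcal{K}(\mathcal{K}(X))$ is the set of compact subsets of the space $\mathcal{K}(X)$, ordered by inclusion. For directed sets $P,Q$, $P \ge_T Q$ means there is a map $\phi:P\to Q$ such that $\phi(C)$ is cofinal in $Q$ for every cofinal $C\subseteq P$; $P =_T Q$ means $P\ge_T Q$ and $Q \ge_T P$. *)

theory Defs
  imports "HOL-Analysis.Analysis"
begin

definition tychonoff_space :: "'a topology \<Rightarrow> bool" where
  "tychonoff_space X \<longleftrightarrow> completely_regular_space X \<and> t1_space X"

definition compacts :: "'a topology \<Rightarrow> 'a set set" where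
  "compacts X = {C. compactin X C}"

definition vietoris :: "'a topology \<Rightarrow> 'a set topology" where
  "vietoris X = topology_generated_by
     ({{C \<in> compacts X. C \<subseteq> U} | U. openin X U} \<union>
      {{C \<in> compacts X. C \<inter> U \<noteq> {}} | U. openin X U})"

definition cofinal_in :: "('a \<Rightarrow> 'a \<Rightarrow> bool) \<Rightarrow> 'a set \<Rightarrow> 'a set \<Rightarrow> bool" where
  "cofinal_in le C P \<longleftrightarrow> C \<subseteq> P \<and> (\<forall>p\<in>P. \<exists>c\<in>C. le p c)"

definition tukey_ge :: "'a set \<Rightarrow> ('a \<Rightarrow> 'a \<Rightarrow> bool) \<Rightarrow> 'b set \<Rightarrow> ('b \<Rightarrow> 'b \<Rightarrow> bool) \<Rightarrow> bool" where
  "tukey_ge P leP Q leQ \<longleftrightarrow>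
     (\<exists>\<phi>. \<phi> ` P \<subseteq> Q \<and> (\<forall>C. cofinal_in leP C P \<longrightarrow> cofinal_in leQ (\<phi> ` C) Q))"

definition tukey_eq :: "'a set \<Rightarrow> ('a \<Rightarrow> 'a \<Rightarrow> bool) \<Rightarrow> 'b set \<Rightarrow> ('b \<Rightarrow> 'b \<Rightarrow> bool) \<Rightarrow> bool" where
  "tukey_eq P leP Q leQ \<longleftrightarrow> tukey_ge P leP Q leQ \<and> tukey_ge Q leQ P leP"

end

theory Submission
  imports Defs
begin

text \<open>The maps \<open>K \<mapsto> {C \<in> \<K>(X). C \<subseteq> K}\<close> and \<open>\<K> \<mapsto> \<Union>\<K>\<close> are monotone and each has cofinal
  image, which is all a Tukey reduction needs. The union of a compact family of compact sets is
  compact by a direct covering argument, and \<open>{C \<in> \<K>(X). C \<subseteq> K}\<close> is Vietoris-compact by the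
  Alexander subbase theorem. No separation axiom enters.\<close>

lemma tukey_geI_monotone:
  assumes "\<phi> ` P \<subseteq> Q"
    and mono: "\<And>p p'. p \<in> P \<Longrightarrow> p' \<in> P \<Longrightarrow> leP p p' \<Longrightarrow> leQ (\<phi> p) (\<phi> p')"
    and cofinal: "\<And>q. q \<in> Q \<Longrightarrow> \<exists>p\<in>P. leQ q (\<phi> p)"
    and "transp leQ"
  shows "tukey_ge P leP Q leQ"
  unfolding tukey_ge_def
proof (intro exI conjI allI impI)
  show "\<phi> ` P \<subseteq> Q" by fact
  fix C assume C: "cofinal_in leP C P"
  show "cofinal_in leQ (\<phi> ` C) Q"
    unfolding cofinal_in_def
  proof (intro conjI ballI)
    show "\<phi> ` C \<subseteq> Q" using C \<open>\<phi> ` P \<subseteq> Q\<close> by (auto simp: cofinal_in_def)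
    fix q assume "q \<in> Q"
    then obtain p where "p \<in> P" "leQ q (\<phi> p)" using cofinal by blast
    moreover obtain c where "c \<in> C" "leP p c" using C \<open>p \<in> P\<close> by (auto simp: cofinal_in_def)
    ultimately show "\<exists>d\<in>\<phi> ` C. leQ q d"
      using C mono \<open>transp leQ\<close> by (metis cofinal_in_def image_eqI subsetD transpD)
  qed
qed

lemma compactin_topology_generated_by_subbase:
  assumes "U \<subseteq> \<Union>\<S>"
    and "\<And>\<C>. \<C> \<subseteq> \<S> \<Longrightarrow> U \<subseteq> \<Union>\<C> \<Longrightarrow> \<exists>\<C>'. finite \<C>' \<and> \<C>' \<subseteq> \<C> \<and> U \<subseteq> \<Union>\<C>'"
  shows "compactin (topology_generated_by \<S>) U"
proof -
  define Y where "Y = topology (arbitrary union_of (finite intersection_of (\<lambda>S. S \<in> \<S>) relative_to U))"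
  have "compact_space Y"
    using Alexander_subbase_alt[OF assms] Y_def by blast
  then have "compactin Y U"
    by (simp add: compact_space_def Y_def)
  moreover have "continuous_map Y (topology_generated_by \<S>) id"
  proof (rule continuous_on_generated_topo)
    fix S assume "S \<in> \<S>"
    then have "openin Y (U \<inter> S)"
      unfolding Y_def openin_subbase
      by (intro arbitrary_union_of_inc relative_to_inc finite_intersection_of_inc) simp
    then show "openin Y (id -` S \<inter> topspace Y)"
      by (simp add: Y_def Int_commute)
  qed (use \<open>U \<subseteq> \<Union>\<S>\<close> Y_def in auto)
  ultimately show ?thesis
    using image_compactin by fastforce
qed

definition vietoris_subbasis :: "'a topology \<Rightarrow> 'a set set set" where
  "vietoris_subbasis X = {{C \<in> compacts X. C \<subseteq> U} | U. openin X U} \<union>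
      {{C \<in> compacts X. C \<inter> U \<noteq> {}} | U. openin X U}"

lemma vietoris_eq_topology_generated_by: "vietoris X = topology_generated_by (vietoris_subbasis X)"
  by (simp add: vietoris_def vietoris_subbasis_def)

lemma Union_vietoris_subbasis: "\<Union>(vietoris_subbasis X) = compacts X"
proof
  show "\<Union>(vietoris_subbasis X) \<subseteq> compacts X"
    unfolding vietoris_subbasis_def by blast
  have "{C \<in> compacts X. C \<subseteq> topspace X} \<in> vietoris_subbasis X"
    unfolding vietoris_subbasis_def by blast
  moreover have "compacts X = {C \<in> compacts X. C \<subseteq> topspace X}"
    by (auto simp: compacts_def dest: compactin_subset_topspace)
  ultimately show "compacts X \<subseteq> \<Union>(vietoris_subbasis X)"
    by blast
qed

lemma topspace_vietoris: "topspace (vietoris X) = compacts X"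
  by (simp add: vietoris_eq_topology_generated_by Union_vietoris_subbasis)

lemma compactin_vietoris_subset_compacts: "compactin (vietoris X) \<K> \<Longrightarrow> \<K> \<subseteq> compacts X"
  by (metis compactin_subset_topspace topspace_vietoris)

lemma openin_vietoris_subsets: "openin X U \<Longrightarrow> openin (vietoris X) {C \<in> compacts X. C \<subseteq> U}"
  unfolding vietoris_eq_topology_generated_by
  by (rule topology_generated_by_Basis) (auto simp: vietoris_subbasis_def)

lemma compactin_Union_vietoris:
  assumes "compactin (vietoris X) \<K>"
  shows "compactin X (\<Union>\<K>)"
  unfolding compactin_def
proof (intro conjI allI impI)
  have \<K>: "\<K> \<subseteq> compacts X"
    using assms by (rule compactin_vietoris_subset_compacts)
  then show "\<Union>\<K> \<subseteq> topspace X"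
    by (auto simp: compacts_def dest: compactin_subset_topspace)
  fix \<U> assume "(\<forall>U\<in>\<U>. openin X U) \<and> \<Union>\<K> \<subseteq> \<Union>\<U>"
  then have opens: "\<forall>U\<in>\<U>. openin X U" and cover: "\<Union>\<K> \<subseteq> \<Union>\<U>"
    by auto
  let ?subsets = "\<lambda>\<F>. {C \<in> compacts X. C \<subseteq> \<Union>\<F>}"
  let ?fins = "{\<F>. finite \<F> \<and> \<F> \<subseteq> \<U>}"
  have "\<K> \<subseteq> \<Union>(?subsets ` ?fins)"
  proof
    fix K assume "K \<in> \<K>"
    then have "compactin X K" "K \<subseteq> \<Union>\<U>"
      using \<K> cover by (auto simp: compacts_def)
    then obtain \<F> where "finite \<F>" "\<F> \<subseteq> \<U>" "K \<subseteq> \<Union>\<F>"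
      using opens unfolding compactin_def by meson
    moreover have "K \<in> compacts X"
      using \<open>K \<in> \<K>\<close> \<K> by blast
    ultimately show "K \<in> \<Union>(?subsets ` ?fins)"
      by auto
  qed
  moreover have "\<forall>V\<in>?subsets ` ?fins. openin (vietoris X) V"
    using opens by (auto intro!: openin_vietoris_subsets)
  ultimately obtain \<V> where \<V>: "finite \<V>" "\<V> \<subseteq> ?subsets ` ?fins" "\<K> \<subseteq> \<Union>\<V>"
    using assms unfolding compactin_def by meson
  then obtain \<FF> where \<FF>: "\<FF> \<subseteq> ?fins" "finite \<FF>" "\<V> = ?subsets ` \<FF>"
    using finite_subset_image[OF \<V>(1,2)] by blast
  then have "finite (\<Union>\<FF>)" "\<Union>\<FF> \<subseteq> \<U>"
    by auto
  moreover have "\<Union>\<K> \<subseteq> \<Union>(\<Union>\<FF>)"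
    using \<V>(3) \<FF>(3) by blast
  ultimately show "\<exists>\<G>. finite \<G> \<and> \<G> \<subseteq> \<U> \<and> \<Union>\<K> \<subseteq> \<Union>\<G>"
    by blast
qed

text \<open>Let \<open>W\<close> be the union of the open sets \<open>V\<close> whose hitting sets \<open>{C. C \<inter> V \<noteq> {}}\<close> occur in
  the cover. The compact set \<open>L - W\<close> lies in some member of the cover; it cannot hit such a \<open>V\<close>,
  so that member is \<open>{C. C \<subseteq> U}\<close>. Then \<open>L \<subseteq> U \<union> W\<close>, and compactness of \<open>L\<close> picks finitely
  many of the \<open>V\<close>.\<close>

lemma vietoris_subbasis_cover_subsets_finite_subcover:
  assumes L: "compactin X L"
    and \<C>: "\<C> \<subseteq> vietoris_subbasis X"
    and cover: "{C \<in> compacts X. C \<subseteq> L} \<subseteq> \<Union>\<C>"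
  shows "\<exists>\<C>'. finite \<C>' \<and> \<C>' \<subseteq> \<C> \<and> {C \<in> compacts X. C \<subseteq> L} \<subseteq> \<Union>\<C>'"
proof -
  let ?hits = "\<lambda>V. {C \<in> compacts X. C \<inter> V \<noteq> {}}"
  define \<V> where "\<V> = {V. openin X V \<and> ?hits V \<in> \<C>}"
  define W where "W = \<Union>\<V>"
  have "openin X W"
    unfolding W_def \<V>_def by auto
  then have "compactin X (L \<inter> (topspace X - W))"
    using L by (intro compact_Int_closedin) auto
  moreover have "L \<inter> (topspace X - W) = L - W"
    using L compactin_subset_topspace by blast
  ultimately have "compactin X (L - W)"
    by simp
  then have "L - W \<in> \<Union>\<C>"
    using cover by (auto simp: compacts_def)
  then obtain c where c: "c \<in> \<C>" "L - W \<in> c"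
    by blast
  then have "c \<in> vietoris_subbasis X"
    using \<C> by blast
  then obtain U where U: "openin X U" "c = {C \<in> compacts X. C \<subseteq> U} \<or> c = ?hits U"
    unfolding vietoris_subbasis_def by blast
  have "c \<noteq> ?hits U"
  proof
    assume hits: "c = ?hits U"
    then have "U \<in> \<V>"
      using U c unfolding \<V>_def by simp
    then have "U \<subseteq> W"
      unfolding W_def by blast
    moreover have "(L - W) \<inter> U \<noteq> {}"
      using c hits by simp
    ultimately show False
      by blast
  qed
  with U have c_eq: "c = {C \<in> compacts X. C \<subseteq> U}"
    by blast
  with c have "L - W \<subseteq> U"
    by simp
  then have "L \<subseteq> \<Union>(insert U \<V>)"
    unfolding W_def by blast
  moreover have "\<forall>V\<in>insert U \<V>. openin X V"
    using U unfolding \<V>_def by blast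
  ultimately obtain \<G> where \<G>: "finite \<G>" "\<G> \<subseteq> insert U \<V>" "L \<subseteq> \<Union>\<G>"
    using L unfolding compactin_def by meson
  show ?thesis
  proof (intro exI conjI)
    let ?\<C>' = "insert c (?hits ` (\<G> \<inter> \<V>))"
    show "finite ?\<C>'" and "?\<C>' \<subseteq> \<C>"
      using \<G> c unfolding \<V>_def by auto
    show "{C \<in> compacts X. C \<subseteq> L} \<subseteq> \<Union>?\<C>'"
    proof
      fix D assume D: "D \<in> {C \<in> compacts X. C \<subseteq> L}"
      show "D \<in> \<Union>?\<C>'"
      proof (cases "D \<subseteq> U")
        case True
        then show ?thesis using D c_eq by blast
      next
        case False
        then obtain x where "x \<in> D" "x \<notin> U" by blast
        then obtain V where "V \<in> \<G> \<inter> \<V>" "x \<in> V"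
          using D \<G> by blast
        then show ?thesis using D \<open>x \<in> D\<close> by blast
      qed
    qed
  qed
qed

lemma compactin_vietoris_subsets:
  assumes "compactin X L"
  shows "compactin (vietoris X) {C \<in> compacts X. C \<subseteq> L}"
  unfolding vietoris_eq_topology_generated_by
proof (rule compactin_topology_generated_by_subbase)
  show "{C \<in> compacts X. C \<subseteq> L} \<subseteq> \<Union>(vietoris_subbasis X)"
    by (auto simp: Union_vietoris_subbasis)
qed (rule vietoris_subbasis_cover_subsets_finite_subcover[OF assms])

theorem mainTheorem5:
  fixes X :: "'a topology"
  assumes "tychonoff_space X"
  shows "tukey_eq (compacts X) (\<subseteq>) (compacts (vietoris X)) (\<subseteq>)"
  unfolding tukey_eq_def
proof
  show "tukey_ge (compacts X) (\<subseteq>) (compacts (vietoris X)) (\<subseteq>)"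
  proof (rule tukey_geI_monotone[where \<phi> = "\<lambda>K. {C \<in> compacts X. C \<subseteq> K}"])
    show "(\<lambda>K. {C \<in> compacts X. C \<subseteq> K}) ` compacts X \<subseteq> compacts (vietoris X)"
      using compactin_vietoris_subsets by (auto simp: compacts_def)
    show "\<exists>K\<in>compacts X. \<K> \<subseteq> {C \<in> compacts X. C \<subseteq> K}" if "\<K> \<in> compacts (vietoris X)" for \<K>
      using that compactin_Union_vietoris compactin_vietoris_subset_compacts
      by (fastforce simp: compacts_def)
  qed (auto intro: transpI)
  show "tukey_ge (compacts (vietoris X)) (\<subseteq>) (compacts X) (\<subseteq>)"
  proof (rule tukey_geI_monotone[where \<phi> = Union])
    show "Union ` compacts (vietoris X) \<subseteq> compacts X"
      by (auto simp: compacts_def intro: compactin_Union_vietoris)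
    show "\<exists>\<K>\<in>compacts (vietoris X). K \<subseteq> \<Union>\<K>" if "K \<in> compacts X" for K
      using that by (intro bexI[of _ "{K}"]) (auto simp: compacts_def topspace_vietoris)
  qed (auto intro: transpI)
qed

end
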